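(* Let $K$ be a field (e.g. $K=\mathbb{C}$), let $r\geqslant 0$ be an integer, and let $\{a_0(n)\}_{n\in\mathbb{Z}},\ldots,\{a_r(n)\}_{n\in\mathbb{Z}}$ be arbitrary sequences of elements of $K$. Let $V$ be the $K$-vector space of all sequences $\{x(n)\}_{n\in\mathbb{Z}}$ of elements of $K$ satisfying \[ a_r(n)x(n+r)+\ldots+a_1(n)x(n+1)+a_0(n)x(n)=0\quad\text{for every } n\in\mathbb{Z}. \] Assume $\dim_K V=\infty$. Then there exists a ray $\mathcal{S}\subseteq\mathbb{Z}$, i.e. a set of the form $\{i\in\mathbb{Z}\mid i\geqslant i_0\}$ or $\{i\in\mathbb{Z}\mid i\leqslant i_0\}$ for some $i_0\in\mathbb{Z}$, such that the subspace of $V$ consisting of the sequences whose support is contained in $\mathcal{S}$ is infinite-dimensional.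
   Context: The support of a sequence $\{x(n)\}_{n\in\mathbb{Z}}$ is $\{i\in\mathbb{Z}\mid x(i)\neq 0\}$. *)

theory Defs
  imports "HOL-Analysis.Analysis" "HOL-Library.Function_Algebras"
begin

definition seq_scale :: "'a::field \<Rightarrow> (int \<Rightarrow> 'a) \<Rightarrow> (int \<Rightarrow> 'a)" where
  "seq_scale c x = (\<lambda>n. c * x n)"

definition supp_seq :: "(int \<Rightarrow> 'a::zero) \<Rightarrow> int set" where
  "supp_seq x = {i. x i \<noteq> 0}"

definition sol_space :: "nat \<Rightarrow> (nat \<Rightarrow> int \<Rightarrow> 'a::field) \<Rightarrow> (int \<Rightarrow> 'a) set" where
  "sol_space r a = {x. \<forall>n. (\<Sum>k\<le>r. a k n * x (n + int k)) = 0}"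

definition inf_dim :: "(int \<Rightarrow> 'a::field) set \<Rightarrow> bool" where
  "inf_dim W \<longleftrightarrow> \<not> (\<exists>B. finite B \<and> B \<subseteq> W \<and> module.span seq_scale B = W)"

definition is_ray :: "int set \<Rightarrow> bool" where
  "is_ray S \<longleftrightarrow> (\<exists>i0. S = {i. i \<ge> i0} \<or> S = {i. i \<le> i0})"

end

theory Submission
  imports Defs
begin

text \<open>A solution vanishing on a window of \<open>r\<close> consecutive indices is the sum of its parts
  to the right and to the left of the window, and both parts are again solutions, since no instance
  of the recurrence involves indices on both sides of the window. Hence the solutions vanishing on
  \<open>{0..<r}\<close> are the sums of solutions supported in \<open>{i. i \<ge> r}\<close> and solutions supported in
  \<open>{i. i < 0}\<close>. Being cut out by \<open>r\<close> linear conditions, they have codimension at most \<open>r\<close>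
  in the solution space, so if both rays carried finite-dimensional solution spaces, the whole
  solution space would be finite-dimensional.\<close>

interpretation seq: module "seq_scale :: 'a::field \<Rightarrow> (int \<Rightarrow> 'a) \<Rightarrow> _"
  by unfold_locales (auto simp: seq_scale_def algebra_simps)

definition finitely_spanned :: "(int \<Rightarrow> 'a::field) set \<Rightarrow> bool" where
  "finitely_spanned W \<longleftrightarrow> (\<exists>B. finite B \<and> B \<subseteq> W \<and> seq.span B = W)"

lemma inf_dim_iff_not_finitely_spanned: "inf_dim W \<longleftrightarrow> \<not> finitely_spanned W"
  by (simp add: inf_dim_def finitely_spanned_def)

lemma finitely_spanned_span: "finite B \<Longrightarrow> finitely_spanned (seq.span B)"
  unfolding finitely_spanned_def by (intro exI[of _ B]) (simp add: seq.span_superset)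

lemma finitely_spanned_sumset:
  assumes "finitely_spanned P" "finitely_spanned Q"
  shows "finitely_spanned {p + q | p q. p \<in> P \<and> q \<in> Q}"
proof -
  obtain BP BQ where "finite BP" "seq.span BP = P" and "finite BQ" "seq.span BQ = Q"
    using assms unfolding finitely_spanned_def by blast
  then have "{p + q | p q. p \<in> P \<and> q \<in> Q} = seq.span (BP \<union> BQ)"
    by (simp add: seq.span_Un)
  then show ?thesis
    using \<open>finite BP\<close> \<open>finite BQ\<close> by (simp add: finitely_spanned_span)
qed

lemma subspace_vanishing_on:
  assumes "seq.subspace U"
  shows "seq.subspace {x \<in> U. \<forall>i\<in>I. x i = 0}"
  using assms unfolding seq.subspace_def by (auto simp: seq_scale_def)

lemma finitely_spanned_from_vanishing_at:
  assumes U: "seq.subspace U" and fin: "finitely_spanned {x \<in> U. x i = 0}"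
  shows "finitely_spanned U"
proof (cases "\<forall>x\<in>U. x i = 0")
  case True
  then have "{x \<in> U. x i = 0} = U" by blast
  then show ?thesis using fin by simp
next
  case False
  then obtain u where u: "u \<in> U" "u i \<noteq> 0" by auto
  obtain B where B: "finite B" "B \<subseteq> U" "seq.span B = {x \<in> U. x i = 0}"
    using fin unfolding finitely_spanned_def by blast
  have "seq.span (insert u B) = U"
  proof (intro set_eqI iffI)
    fix x assume "x \<in> seq.span (insert u B)"
    then obtain k where "x - seq_scale k u \<in> U"
      using B(3) by (auto simp: seq.span_insert)
    then have "(x - seq_scale k u) + seq_scale k u \<in> U"
      using U u(1) seq.subspace_add seq.subspace_scale by blast
    then show "x \<in> U" by simp
  next
    fix x assume "x \<in> U"
    then have "x - seq_scale (x i / u i) u \<in> U"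
      using U u(1) seq.subspace_diff seq.subspace_scale by blast
    moreover have "(x - seq_scale (x i / u i) u) i = 0"
      using u(2) by (simp add: seq_scale_def)
    ultimately show "x \<in> seq.span (insert u B)"
      using B(3) by (auto simp: seq.span_insert)
  qed
  then show ?thesis
    unfolding finitely_spanned_def using B u by (intro exI[of _ "insert u B"]) auto
qed

lemma finitely_spanned_from_vanishing_on:
  assumes "finite I" "seq.subspace U" "finitely_spanned {x \<in> U. \<forall>i\<in>I. x i = 0}"
  shows "finitely_spanned U"
  using assms
proof (induction I arbitrary: U rule: finite_induct)
  case empty
  then show ?case by simp
next
  case (insert i I)
  have "{x \<in> {x \<in> U. \<forall>j\<in>I. x j = 0}. x i = 0} = {x \<in> U. \<forall>j\<in>insert i I. x j = 0}"
    by auto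
  then have "finitely_spanned {x \<in> {x \<in> U. \<forall>j\<in>I. x j = 0}. x i = 0}"
    using insert.prems(2) by simp
  with subspace_vanishing_on[OF insert.prems(1)]
  have "finitely_spanned {x \<in> U. \<forall>j\<in>I. x j = 0}"
    by (rule finitely_spanned_from_vanishing_at)
  then show ?case
    using insert.IH insert.prems(1) by blast
qed

lemma subspace_sol_space: "seq.subspace (sol_space r a)"
proof (rule seq.subspaceI)
  show "0 \<in> sol_space r a" by (simp add: sol_space_def)
next
  fix x y assume "x \<in> sol_space r a" "y \<in> sol_space r a"
  then show "x + y \<in> sol_space r a"
    by (simp add: sol_space_def distrib_left sum.distrib)
next
  fix c x assume "x \<in> sol_space r a"
  then have "(\<Sum>k\<le>r. a k n * (c * x (n + int k))) = 0" for n
    by (simp add: sol_space_def sum_distrib_left[symmetric] mult.left_commute)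
  then show "seq_scale c x \<in> sol_space r a"
    by (simp add: sol_space_def seq_scale_def)
qed

lemma sol_space_truncate_below_window:
  assumes x: "x \<in> sol_space r a" and window: "\<And>i. m \<le> i \<Longrightarrow> i < m + int r \<Longrightarrow> x i = 0"
  shows "(\<lambda>i. if i < m then x i else 0) \<in> sol_space r a"
  unfolding sol_space_def
proof (intro CollectI allI)
  fix n
  show "(\<Sum>k\<le>r. a k n * (if n + int k < m then x (n + int k) else 0)) = 0"
  proof (cases "n < m")
    case True
    then have "(\<Sum>k\<le>r. a k n * (if n + int k < m then x (n + int k) else 0))
        = (\<Sum>k\<le>r. a k n * x (n + int k))"
      by (intro sum.cong) (auto simp: window)
    then show ?thesis using x by (simp add: sol_space_def)
  qed simp
qed

lemma sol_space_vanishing_on_window_eq_sumset: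
  "{x \<in> sol_space r a. \<forall>i\<in>{m..<m + int r}. x i = 0} =
    {p + q | p q. p \<in> {x \<in> sol_space r a. supp_seq x \<subseteq> {i. i \<ge> m + int r}} \<and>
                  q \<in> {x \<in> sol_space r a. supp_seq x \<subseteq> {i. i < m}}}"
  (is "?window = {p + q | p q. p \<in> ?right \<and> q \<in> ?left}")
proof
  show "?window \<subseteq> {p + q | p q. p \<in> ?right \<and> q \<in> ?left}"
  proof
    fix x assume "x \<in> ?window"
    then have x: "x \<in> sol_space r a" and window: "\<And>i. m \<le> i \<Longrightarrow> i < m + int r \<Longrightarrow> x i = 0"
      by auto
    let ?q = "\<lambda>i. if i < m then x i else 0"
    have "?q \<in> sol_space r a"
      using x window by (rule sol_space_truncate_below_window)
    moreover from this have "x - ?q \<in> sol_space r a"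
      using x subspace_sol_space seq.subspace_diff by blast
    moreover have "supp_seq (x - ?q) \<subseteq> {i. i \<ge> m + int r}"
    proof
      fix i assume "i \<in> supp_seq (x - ?q)"
      then have "m \<le> i" "x i \<noteq> 0"
        by (auto simp: supp_seq_def split: if_splits)
      then show "i \<in> {i. i \<ge> m + int r}"
        using window[of i] by fastforce
    qed
    moreover have "supp_seq ?q \<subseteq> {i. i < m}"
      by (auto simp: supp_seq_def)
    ultimately have "x - ?q \<in> ?right" "?q \<in> ?left"
      by auto
    moreover have "x = (x - ?q) + ?q"
      by simp
    ultimately show "x \<in> {p + q | p q. p \<in> ?right \<and> q \<in> ?left}"
      by blast
  qed
  show "{p + q | p q. p \<in> ?right \<and> q \<in> ?left} \<subseteq> ?window"
  proof
    fix x assume "x \<in> {p + q | p q. p \<in> ?right \<and> q \<in> ?left}"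
    then obtain p q where p: "p \<in> ?right" and q: "q \<in> ?left" and "x = p + q"
      by blast
    moreover have "p i = 0" "q i = 0" if "i \<in> {m..<m + int r}" for i
      using p q that by (auto simp: supp_seq_def subset_iff)
    ultimately show "x \<in> ?window"
      using seq.subspace_add[OF subspace_sol_space] by auto
  qed
qed

theorem lemma1:
  fixes r :: nat and a :: "nat \<Rightarrow> int \<Rightarrow> 'a::field"
  assumes "inf_dim (sol_space r a)"
  shows "\<exists>S. is_ray S \<and> inf_dim {x \<in> sol_space r a. supp_seq x \<subseteq> S}"
proof (rule ccontr)
  assume no_ray: "\<not> ?thesis"
  have "is_ray {i. i \<ge> int r}"
    unfolding is_ray_def by blast
  moreover have "is_ray {i::int. i < 0}"
    unfolding is_ray_def by (intro exI[of _ "-1"]) auto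
  ultimately have "finitely_spanned {x \<in> sol_space r a. supp_seq x \<subseteq> {i. i \<ge> int r}}"
    and "finitely_spanned {x \<in> sol_space r a. supp_seq x \<subseteq> {i. i < 0}}"
    using no_ray by (simp_all add: inf_dim_iff_not_finitely_spanned)
  from finitely_spanned_sumset[OF this]
  have "finitely_spanned {x \<in> sol_space r a. \<forall>i\<in>{0..<0 + int r}. x i = 0}"
    unfolding sol_space_vanishing_on_window_eq_sumset by simp
  then have "finitely_spanned (sol_space r a)"
    by (rule finitely_spanned_from_vanishing_on[OF finite_atLeastLessThan_int subspace_sol_space])
  then show False
    using assms by (simp add: inf_dim_iff_not_finitely_spanned)
qed

end
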